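(* Let $k\ge2$ and let $G,H$ be connected graphs that are not $2$-connected. For vertices $v\in V(G_\perp)$ and $w\in V(H)\setminus V(H_\perp)$ we have $\chi^k_G(v)\ne\chi^k_H(w)$.
   Context: Graphs are finite, simple, undirected (possibly colored). A graph is $2$-connected if it has more than $2$ vertices and removing any one vertex leaves it connected. A separator of $G$ is a set $S$ with $G-S$ disconnected. $P(G)$ is the set of pairs $(S,K)$ with $S$ a separator of minimum cardinality and $K$ the vertex set of a connected component of $G-S$, partially ordered by $(S,K)\le(S',K')$ iff $K\subseteq K'$; $P_0(G)$ is the set of minimal elements; $V(G_\perp):=V(G)\setminus\bigcup_{(S,K)\in P_0(G)}K$. For $k\ge2$, the $k$-dimensional Weisfeiler–Leman algorithm computes a coloring of $V(G)^k$: the initial color of a tuple consists of its input color and the isomorphism type of the ordered induced subgraph on its entries; in each round the new color of $\bar v$ is the pair of its old color and the multiset, over $w\in V(G)$, of the $k$-tuples whose $i$-th component is the old color of $\bar v$ with its $i$-th entry replaced by $w$; the stable coloring is $\chi^k_G$, with canonical colors comparable across graphs. $\chi^k_G(v):=\chi^k_G(v,\dots,v)$. *)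

theory Defs
  imports Main "HOL-Library.Multiset"
begin

record ('a, 'c) cgraph =
  verts :: "'a set"
  adj   :: "'a \<Rightarrow> 'a \<Rightarrow> bool"
  vcol  :: "'a \<Rightarrow> 'c"

definition wf_graph :: "('a, 'c) cgraph \<Rightarrow> bool" where
  "wf_graph G \<longleftrightarrow> finite (verts G)
     \<and> (\<forall>x y. adj G x y \<longrightarrow> x \<in> verts G \<and> y \<in> verts G)
     \<and> (\<forall>x y. adj G x y \<longrightarrow> adj G y x)
     \<and> (\<forall>x. \<not> adj G x x)"

definition reach_in :: "('a, 'c) cgraph \<Rightarrow> 'a set \<Rightarrow> 'a \<Rightarrow> 'a \<Rightarrow> bool" where
  "reach_in G X x y \<longleftrightarrow> x \<in> X \<and> (\<lambda>a b. a \<in> X \<and> b \<in> X \<and> adj G a b)\<^sup>*\<^sup>* x y"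

definition connected_set :: "('a, 'c) cgraph \<Rightarrow> 'a set \<Rightarrow> bool" where
  "connected_set G X \<longleftrightarrow> X \<noteq> {} \<and> (\<forall>x\<in>X. \<forall>y\<in>X. reach_in G X x y)"

definition connected :: "('a, 'c) cgraph \<Rightarrow> bool" where
  "connected G \<longleftrightarrow> connected_set G (verts G)"

definition two_connected :: "('a, 'c) cgraph \<Rightarrow> bool" where
  "two_connected G \<longleftrightarrow> card (verts G) > 2
     \<and> (\<forall>v\<in>verts G. connected_set G (verts G - {v}))"

definition separator :: "('a, 'c) cgraph \<Rightarrow> 'a set \<Rightarrow> bool" where
  "separator G S \<longleftrightarrow> S \<subseteq> verts G
     \<and> (\<exists>x\<in>verts G - S. \<exists>y\<in>verts G - S. \<not> reach_in G (verts G - S) x y)"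

definition min_separator :: "('a, 'c) cgraph \<Rightarrow> 'a set \<Rightarrow> bool" where
  "min_separator G S \<longleftrightarrow> separator G S \<and> (\<forall>S'. separator G S' \<longrightarrow> card S \<le> card S')"

definition component_of :: "('a, 'c) cgraph \<Rightarrow> 'a set \<Rightarrow> 'a set \<Rightarrow> bool" where
  "component_of G S K \<longleftrightarrow>
     (\<exists>x\<in>verts G - S. K = {y. reach_in G (verts G - S) x y})"

definition Psep :: "('a, 'c) cgraph \<Rightarrow> ('a set \<times> 'a set) set" where
  "Psep G = {(S, K). min_separator G S \<and> component_of G S K}"

definition P0sep :: "('a, 'c) cgraph \<Rightarrow> ('a set \<times> 'a set) set" where
  "P0sep G = {(S, K) \<in> Psep G. \<not> (\<exists>(S', K') \<in> Psep G. K' \<subset> K)}"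

definition verts_bot :: "('a, 'c) cgraph \<Rightarrow> 'a set" where
  "verts_bot G = verts G - (\<Union>(S, K) \<in> P0sep G. K)"

text \<open>Canonical colours: an initial colour (input colours of the entries plus the
  isomorphism type of the ordered induced subgraph, given by the adjacency and
  equality pattern), or a refined colour (old colour, multiset of colour tuples).\<close>
datatype 'c wlcol =
    WInit "'c list" "(bool \<times> bool) list list"
  | WRef "'c wlcol" "'c wlcol list multiset"

primrec wl_round :: "('a, 'c) cgraph \<Rightarrow> nat \<Rightarrow> nat \<Rightarrow> 'a list \<Rightarrow> 'c wlcol" where
  "wl_round G k 0 t =
     WInit (map (vcol G) t)
           (map (\<lambda>i. map (\<lambda>j. (adj G (t!i) (t!j), t!i = t!j)) [0..<k]) [0..<k])"
| "wl_round G k (Suc r) t =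
     WRef (wl_round G k r t)
          (image_mset (\<lambda>w. map (\<lambda>i. wl_round G k r (t[i := w])) [0..<k]) (mset_set (verts G)))"

text \<open>The stable colouring, as a canonical object comparable across graphs: the
  sequence of colours of all rounds. Two tuples (possibly in different graphs)
  get the same stable colour iff they get the same colour in every round.\<close>
definition wl_stable :: "('a, 'c) cgraph \<Rightarrow> nat \<Rightarrow> 'a list \<Rightarrow> nat \<Rightarrow> 'c wlcol" where
  "wl_stable G k t = (\<lambda>r. wl_round G k r t)"

definition wl_vertex :: "('a, 'c) cgraph \<Rightarrow> nat \<Rightarrow> 'a \<Rightarrow> nat \<Rightarrow> 'c wlcol" where
  "wl_vertex G k v = wl_stable G k (replicate k v)"

end

theory Submission
  imports Defs "HOL-Library.FuncSet" "HOL-Library.Infinite_Set"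
begin

text \<open>If the stable colours of v and w agree, then k-WL equivalence propagates to the tuples
  obtained by changing one entry along a suitable bijection V(G) \<rightarrow> V(H). For pairs it
  preserves all walk counts, hence the numbers of walks avoiding a vertex b, hence reachability
  in G - b; in particular cut vertices correspond to cut vertices. Since w \<notin> V(H_\<bottom>), w lies in
  a minimal component K of H - c for a cut vertex c, and K contains no cut vertex. The vertex
  c' of G corresponding to c is a cut vertex, and since v \<in> V(G_\<bottom>) the component of v in
  G - c' contains a cut vertex d; its partner lies in K and is a cut vertex, a contradiction.\<close>

definition wl_equiv :: "('a, 'c) cgraph \<Rightarrow> ('b, 'c) cgraph \<Rightarrow> nat \<Rightarrow> 'a list \<Rightarrow> 'b list \<Rightarrow> bool" where
  "wl_equiv G H k s t \<longleftrightarrow> (\<forall>r. wl_round G k r s = wl_round H k r t)"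

lemma wl_equiv_sym: "wl_equiv G H k s t \<Longrightarrow> wl_equiv H G k t s"
  by (simp add: wl_equiv_def)

lemma wl_round_eq_le:
  assumes "wl_round G k r' s = wl_round H k r' t" "r \<le> r'"
  shows "wl_round G k r s = wl_round H k r t"
  using assms by (induction r') (auto simp: le_Suc_eq)

lemma wl_equiv_initial:
  assumes "wl_equiv G H k s t" "i < k" "j < k"
  shows "adj G (s!i) (s!j) = adj H (t!i) (t!j) \<and> (s!i = s!j) = (t!i = t!j)"
proof -
  have "wl_round G k 0 s = wl_round H k 0 t"
    using assms(1) unfolding wl_equiv_def by blast
  then show ?thesis
    using assms(2,3) by simp
qed

lemma wl_equiv_upd_eq_iff:
  assumes "wl_equiv G H k (s[i := x]) (t[i := y])" "i < k" "j < k" "i \<noteq> j"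
    and "length s = k" "length t = k"
  shows "x = s!j \<longleftrightarrow> y = t!j"
  using wl_equiv_initial[OF assms(1-3)] assms(2-6) by auto

lemma image_mset_mset_set_eq_imp_bij_betw:
  assumes "finite A" "finite B"
    and "image_mset \<phi> (mset_set A) = image_mset \<psi> (mset_set B)"
  shows "\<exists>f. bij_betw f A B \<and> (\<forall>z\<in>A. \<phi> z = \<psi> (f z))"
  using assms
proof (induction A arbitrary: B rule: finite_induct)
  case empty
  then have "B = {}" by (metis image_mset_is_empty_iff mset_set.empty mset_set_empty_iff)
  then show ?case by (auto simp: bij_betw_def)
next
  case (insert a A)
  have "\<phi> a \<in># image_mset \<psi> (mset_set B)"
    using insert by (metis image_mset_add_mset mset_set.insert union_single_eq_member)
  then obtain b where b: "b \<in> B" "\<psi> b = \<phi> a" using insert.prems by auto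
  have "image_mset \<psi> (mset_set (B - {b})) = image_mset \<psi> (mset_set B) - {#\<psi> b#}"
    using b insert.prems by (simp add: mset_set_Diff image_mset_Diff)
  also have "\<dots> = image_mset \<phi> (mset_set A)"
    using insert b by (simp, metis add_mset_remove_trivial)
  finally obtain f where f: "bij_betw f A (B - {b})" "\<forall>z\<in>A. \<phi> z = \<psi> (f z)"
    using insert.IH[of "B - {b}"] insert.prems by auto
  have "bij_betw (f(a := b)) A (B - {b})"
    using f(1) insert.hyps by (metis bij_betw_cong fun_upd_other)
  then have "bij_betw (f(a := b)) (insert a A) B"
    using insert.hyps b by (auto simp: bij_betw_def inj_on_def)
  moreover have "\<forall>z\<in>insert a A. \<phi> z = \<psi> ((f(a := b)) z)"
    using f insert.hyps b by auto
  ultimately show ?case by blast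
qed

text \<open>Some bijection must occur at infinitely many indices r, and by monotonicity it then
  works at every index.\<close>
lemma finite_bij_betw_uniform:
  fixes Q :: "nat \<Rightarrow> 'a \<Rightarrow> 'b \<Rightarrow> bool"
  assumes fin: "finite A" "finite B"
    and ex: "\<And>r. \<exists>f. bij_betw f A B \<and> (\<forall>z\<in>A. Q r z (f z))"
    and mono: "\<And>r r' z y. Q r' z y \<Longrightarrow> r \<le> r' \<Longrightarrow> Q r z y"
  shows "\<exists>f. bij_betw f A B \<and> (\<forall>z\<in>A. \<forall>r. Q r z (f z))"
proof -
  obtain F where F: "\<And>r. bij_betw (F r) A B" "\<And>r. \<forall>z\<in>A. Q r z (F r z)"
    using ex by metis
  define h where "h r = restrict (F r) A" for r
  have "h r \<in> (\<Pi>\<^sub>E z\<in>A. B)" for r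
    using F(1)[of r] unfolding h_def bij_betw_def by auto
  then have "finite (range h)"
    by (intro finite_subset[OF _ finite_PiE[OF fin(1), of "\<lambda>_. B"]]) (use fin(2) in auto)
  then obtain y where y: "y \<in> range h" "infinite (h -` {y})"
    using inf_img_fin_dom[of h UNIV] by auto
  then obtain r0 where r0: "y = h r0" by auto
  have "bij_betw y A B"
    using F(1)[of r0] unfolding r0 h_def by (rule bij_betw_cong[THEN iffD1, rotated]) auto
  moreover have "Q r z (y z)" if z: "z \<in> A" for z r
  proof -
    obtain r' where r': "r \<le> r'" "h r' = y"
      using y(2) unfolding infinite_nat_iff_unbounded_le by auto
    then have "Q r' z (y z)"
      using F(2)[of r'] z unfolding h_def by auto
    then show ?thesis using mono r'(1) by blast
  qed
  ultimately show ?thesis by blast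
qed

lemma wl_equiv_bij:
  assumes R: "wl_equiv G H k s t" and fin: "finite (verts G)" "finite (verts H)"
  shows "\<exists>f. bij_betw f (verts G) (verts H) \<and>
           (\<forall>z\<in>verts G. \<forall>i<k. wl_equiv G H k (s[i := z]) (t[i := f z]))"
proof -
  define Q where "Q r z y \<longleftrightarrow> (\<forall>i<k. wl_round G k r (s[i := z]) = wl_round H k r (t[i := y]))"
    for r z y
  have "\<exists>f. bij_betw f (verts G) (verts H) \<and> (\<forall>z\<in>verts G. Q r z (f z))" for r
  proof -
    have "wl_round G k (Suc r) s = wl_round H k (Suc r) t"
      using R unfolding wl_equiv_def by blast
    then obtain f where "bij_betw f (verts G) (verts H)"
      "\<forall>z\<in>verts G. map (\<lambda>i. wl_round G k r (s[i := z])) [0..<k]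
                  = map (\<lambda>i. wl_round H k r (t[i := f z])) [0..<k]"
      using image_mset_mset_set_eq_imp_bij_betw[OF fin] by (simp del: map_eq_conv) blast
    then show ?thesis unfolding Q_def by auto
  qed
  moreover have "Q r z y" if "Q r' z y" "r \<le> r'" for r r' z y
    using that wl_round_eq_le unfolding Q_def by blast
  ultimately show ?thesis
    using finite_bij_betw_uniform[OF fin, of Q] unfolding Q_def wl_equiv_def by blast
qed

lemma wl_equiv_update_surj:
  assumes "wl_equiv G H k s t" "finite (verts G)" "finite (verts H)" "i < k" "y \<in> verts H"
  shows "\<exists>x\<in>verts G. wl_equiv G H k (s[i := x]) (t[i := y])"
proof -
  obtain f where "bij_betw f (verts G) (verts H)"
    "\<forall>z\<in>verts G. \<forall>i<k. wl_equiv G H k (s[i := z]) (t[i := f z])"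
    using wl_equiv_bij[OF assms(1-3)] by blast
  then show ?thesis using assms(4,5) by (metis bij_betw_imp_surj_on imageE)
qed

lemma wl_equiv_update_nth:
  assumes R: "wl_equiv G H k s t" and fin: "finite (verts G)" "finite (verts H)"
    and s: "set s \<subseteq> verts G" and len: "length s = k" "length t = k"
    and ij: "i < k" "j < k"
  shows "wl_equiv G H k (s[j := s!i]) (t[j := t!i])"
proof (cases "i = j")
  case True
  then show ?thesis using R by simp
next
  case False
  obtain f where f: "\<forall>z\<in>verts G. \<forall>i<k. wl_equiv G H k (s[i := z]) (t[i := f z])"
    using wl_equiv_bij[OF R fin] by blast
  have "s!i \<in> verts G" using s ij len by auto
  then have R': "wl_equiv G H k (s[j := s!i]) (t[j := f (s!i)])"
    using f ij by blast
  then have "t!i = f (s!i)"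
    using wl_equiv_upd_eq_iff[OF R' ij(2,1)] False len by simp
  then show ?thesis using R' by simp
qed

primrec walk_count :: "('a, 'c) cgraph \<Rightarrow> nat \<Rightarrow> 'a \<Rightarrow> 'a \<Rightarrow> nat" where
  "walk_count G 0 x y = (if x = y then 1 else 0)"
| "walk_count G (Suc l) x y = (\<Sum>z\<in>verts G. if adj G x z then walk_count G l z y else 0)"

lemma wl_equiv_walk_count:
  assumes "wl_equiv G H k s t" "finite (verts G)" "finite (verts H)" "k \<ge> 2"
    "length s = k" "length t = k"
  shows "walk_count G l (s!0) (s!1) = walk_count H l (t!0) (t!1)"
  using assms
proof (induction l arbitrary: s t)
  case 0
  then show ?case using wl_equiv_initial[OF 0(1), of 0 1] by simp
next
  case (Suc l)
  obtain f where bij: "bij_betw f (verts G) (verts H)" and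
    f: "\<forall>z\<in>verts G. \<forall>i<k. wl_equiv G H k (s[i := z]) (t[i := f z])"
    using wl_equiv_bij[OF Suc.prems(1-3)] by blast
  have "walk_count H (Suc l) (t!0) (t!1)
      = (\<Sum>z\<in>verts G. if adj H (t!0) (f z) then walk_count H l (f z) (t!1) else 0)"
    using sum.reindex_bij_betw[OF bij, of "\<lambda>z. if adj H (t!0) z then walk_count H l z (t!1) else 0"]
    by (simp del: One_nat_def)
  also have "\<dots> = (\<Sum>z\<in>verts G. if adj G (s!0) z then walk_count G l z (s!1) else 0)"
  proof (rule sum.cong[OF refl])
    fix z assume z: "z \<in> verts G"
    have "wl_equiv G H k (s[1 := z]) (t[1 := f z])" using f z Suc.prems by auto
    then have "adj G (s!0) z = adj H (t!0) (f z)"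
      using wl_equiv_initial[of G H k "s[1 := z]" "t[1 := f z]" 0 1] Suc.prems by auto
    moreover have "wl_equiv G H k (s[0 := z]) (t[0 := f z])" using f z Suc.prems by auto
    then have "walk_count G l z (s!1) = walk_count H l (f z) (t!1)"
      using Suc.IH[of "s[0 := z]" "t[0 := f z]"] Suc.prems by auto
    ultimately show "(if adj H (t!0) (f z) then walk_count H l (f z) (t!1) else 0)
        = (if adj G (s!0) z then walk_count G l z (s!1) else 0)"
      by simp
  qed
  finally show ?case by (simp del: One_nat_def)
qed

lemma walk_count_Suc_right:
  assumes wf: "wf_graph G"
  shows "walk_count G (Suc l) x y = (\<Sum>z\<in>verts G. if adj G z y then walk_count G l x z else 0)"
proof (induction l arbitrary: x)
  case 0
  have fin: "finite (verts G)" and adj_verts: "adj G x y \<Longrightarrow> x \<in> verts G \<and> y \<in> verts G"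
    using wf unfolding wf_graph_def by blast+
  have "walk_count G (Suc 0) x y = (\<Sum>z\<in>verts G. if z = y then (if adj G x y then 1 else 0) else 0)"
    unfolding walk_count.simps by (rule sum.cong) auto
  also have "\<dots> = (\<Sum>z\<in>verts G. if z = x then (if adj G x y then 1 else 0) else 0)"
    using fin adj_verts by (simp add: sum.delta)
  also have "\<dots> = (\<Sum>z\<in>verts G. if adj G z y then walk_count G 0 x z else 0)"
    by (rule sum.cong) auto
  finally show ?case .
next
  case (Suc l)
  have "walk_count G (Suc (Suc l)) x y
     = (\<Sum>z\<in>verts G. if adj G x z then \<Sum>u\<in>verts G. if adj G u y then walk_count G l z u else 0 else 0)"
    by (simp only: walk_count.simps(2)[of G "Suc l"] Suc.IH)
  also have "\<dots> = (\<Sum>z\<in>verts G. \<Sum>u\<in>verts G. if adj G x z \<and> adj G u y then walk_count G l z u else 0)"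
    by (rule sum.cong) (auto intro: sum.cong)
  also have "\<dots> = (\<Sum>u\<in>verts G. if adj G u y then \<Sum>z\<in>verts G. if adj G x z then walk_count G l z u else 0 else 0)"
    by (subst sum.swap) (rule sum.cong; auto intro: sum.cong)
  also have "\<dots> = (\<Sum>u\<in>verts G. if adj G u y then walk_count G (Suc l) x u else 0)"
    by (simp only: walk_count.simps(2))
  finally show ?case .
qed

lemma walk_count_sym:
  assumes wf: "wf_graph G"
  shows "walk_count G l x y = walk_count G l y x"
proof (induction l arbitrary: x y)
  case (Suc l)
  have "walk_count G (Suc l) x y = (\<Sum>z\<in>verts G. if adj G z y then walk_count G l x z else 0)"
    by (rule walk_count_Suc_right[OF wf])
  also have "\<dots> = walk_count G (Suc l) y x"
    using wf Suc.IH unfolding wf_graph_def by (auto intro: sum.cong)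
  finally show ?case .
qed simp

primrec avoiding_walk_count :: "('a, 'c) cgraph \<Rightarrow> 'a \<Rightarrow> nat \<Rightarrow> 'a \<Rightarrow> 'a \<Rightarrow> nat" where
  "avoiding_walk_count G b 0 x y = (if x = y \<and> x \<noteq> b then 1 else 0)"
| "avoiding_walk_count G b (Suc l) x y =
     (if x = b then 0 else (\<Sum>z\<in>verts G. if adj G x z then avoiding_walk_count G b l z y else 0))"

primrec first_hit_count :: "('a, 'c) cgraph \<Rightarrow> 'a \<Rightarrow> nat \<Rightarrow> 'a \<Rightarrow> nat" where
  "first_hit_count G b 0 x = (if x = b then 1 else 0)"
| "first_hit_count G b (Suc l) x =
     (if x = b then 0 else (\<Sum>z\<in>verts G. if adj G x z then first_hit_count G b l z else 0))"

text \<open>A walk either avoids b or splits at its first visit to b.\<close>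
lemma walk_count_split_first_hit:
  "walk_count G l x y
     = avoiding_walk_count G b l x y + (\<Sum>i\<le>l. first_hit_count G b i x * walk_count G (l - i) b y)"
proof (induction l arbitrary: x)
  case (Suc l)
  show ?case
  proof (cases "x = b")
    case True
    then show ?thesis by (simp add: sum.atMost_Suc_shift del: sum.atMost_Suc)
  next
    case False
    have "walk_count G (Suc l) x y
        = (\<Sum>z\<in>verts G. if adj G x z then avoiding_walk_count G b l z y else 0)
          + (\<Sum>z\<in>verts G. \<Sum>i\<le>l. if adj G x z then first_hit_count G b i z * walk_count G (l - i) b y else 0)"
      by (simp add: Suc.IH sum.distrib[symmetric] if_distrib cong: if_cong) (auto intro: sum.cong)
    also have "(\<Sum>z\<in>verts G. \<Sum>i\<le>l. if adj G x z then first_hit_count G b i z * walk_count G (l - i) b y else 0)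
        = (\<Sum>i\<le>l. first_hit_count G b (Suc i) x * walk_count G (Suc l - Suc i) b y)"
      using False by (subst sum.swap) (auto simp: sum_distrib_right intro!: sum.cong)
    finally show ?thesis
      using False by (simp add: sum.atMost_Suc_shift del: sum.atMost_Suc)
  qed
qed simp

lemma avoiding_walk_count_to_avoided: "avoiding_walk_count G b l x b = 0"
proof (induction l arbitrary: x)
  case (Suc l)
  then show ?case by (simp add: sum.neutral)
qed simp

lemma walk_count_to_first_hit:
  "walk_count G l x b = first_hit_count G b l x + (\<Sum>i<l. first_hit_count G b i x * walk_count G (l - i) b b)"
  using walk_count_split_first_hit[of G l x b b]
  by (simp add: avoiding_walk_count_to_avoided lessThan_Suc_atMost[symmetric])

lemma first_hit_count_determined:
  assumes "\<forall>m. walk_count G m x b = walk_count H m x' b'"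
    and "\<forall>m. walk_count G m b b = walk_count H m b' b'"
  shows "first_hit_count G b l x = first_hit_count H b' l x'"
proof (induction l rule: less_induct)
  case (less l)
  have "(\<Sum>i<l. first_hit_count G b i x * walk_count G (l - i) b b)
      = (\<Sum>i<l. first_hit_count H b' i x' * walk_count H (l - i) b' b')"
    using less assms(2) by (intro sum.cong) auto
  then show ?case
    using walk_count_to_first_hit[of G l x b] walk_count_to_first_hit[of H l x' b'] assms(1) by simp
qed

lemma avoiding_walk_count_determined:
  assumes "\<forall>m. walk_count G m x b = walk_count H m x' b'"
    and "\<forall>m. walk_count G m b b = walk_count H m b' b'"
    and "\<forall>m. walk_count G m x y = walk_count H m x' y'"
    and "\<forall>m. walk_count G m b y = walk_count H m b' y'"
  shows "avoiding_walk_count G b l x y = avoiding_walk_count H b' l x' y'"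
proof -
  have "(\<Sum>i\<le>l. first_hit_count G b i x * walk_count G (l - i) b y)
      = (\<Sum>i\<le>l. first_hit_count H b' i x' * walk_count H (l - i) b' y')"
    using first_hit_count_determined[OF assms(1,2)] assms(4) by (intro sum.cong) auto
  then show ?thesis
    using walk_count_split_first_hit[of G l x y b] walk_count_split_first_hit[of H l x' y' b'] assms(3)
    by simp
qed

lemma reach_in_refl: "x \<in> X \<Longrightarrow> reach_in G X x x"
  by (simp add: reach_in_def)

lemma reach_in_mem:
  assumes "reach_in G X x y"
  shows "y \<in> X"
proof -
  have "(\<lambda>a b. a \<in> X \<and> b \<in> X \<and> adj G a b)\<^sup>*\<^sup>* x y" "x \<in> X"
    using assms unfolding reach_in_def by blast+
  then show ?thesis by (induction rule: rtranclp_induct) auto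
qed

lemma reach_in_trans: "reach_in G X x y \<Longrightarrow> reach_in G X y z \<Longrightarrow> reach_in G X x z"
  unfolding reach_in_def by auto

lemma reach_in_step: "reach_in G X x y \<Longrightarrow> adj G y z \<Longrightarrow> z \<in> X \<Longrightarrow> reach_in G X x z"
  using reach_in_mem[of G X x y] unfolding reach_in_def
  by (auto intro: rtranclp.rtrancl_into_rtrancl)

lemma reach_in_sym:
  assumes wf: "wf_graph G" and r: "reach_in G X x y"
  shows "reach_in G X y x"
proof -
  let ?r = "\<lambda>a b. a \<in> X \<and> b \<in> X \<and> adj G a b"
  have "?r\<^sup>*\<^sup>* x y" using r unfolding reach_in_def by blast
  then have "?r\<^sup>*\<^sup>* y x"
  proof (induction rule: rtranclp_induct)
    case (step y z)
    then have "?r z y" using wf unfolding wf_graph_def by blast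
    then show ?case using step converse_rtranclp_into_rtranclp[of ?r z y x] by blast
  qed simp
  then show ?thesis using reach_in_mem[OF r] unfolding reach_in_def by blast
qed

lemma reach_in_mono_on_component:
  assumes r: "reach_in G X a z" and sub: "\<And>y. reach_in G X a y \<Longrightarrow> y \<in> Y"
  shows "reach_in G Y a z"
proof -
  have a: "a \<in> X" "(\<lambda>a b. a \<in> X \<and> b \<in> X \<and> adj G a b)\<^sup>*\<^sup>* a z"
    using r unfolding reach_in_def by blast+
  from a(2) have "reach_in G X a z \<and> reach_in G Y a z"
  proof (induction rule: rtranclp_induct)
    case base
    then show ?case using a(1) sub reach_in_refl by metis
  next
    case (step y z)
    then have "reach_in G X a z" using reach_in_step by metis
    then show ?case using step sub reach_in_step by metis
  qed
  then show ?thesis by blast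
qed

lemma reach_in_delete_iff_avoiding_walk:
  assumes wf: "wf_graph G" and x: "x \<in> verts G"
  shows "reach_in G (verts G - {b}) x y \<longleftrightarrow> (\<exists>l. avoiding_walk_count G b l x y > 0)"
proof
  let ?r = "\<lambda>u z. u \<in> verts G - {b} \<and> z \<in> verts G - {b} \<and> adj G u z"
  have fin: "finite (verts G)" using wf unfolding wf_graph_def by blast
  assume "reach_in G (verts G - {b}) x y"
  then have "?r\<^sup>*\<^sup>* x y" "x \<in> verts G - {b}" unfolding reach_in_def by blast+
  then show "\<exists>l. avoiding_walk_count G b l x y > 0"
  proof (induction rule: converse_rtranclp_induct)
    case (step u z)
    then obtain l where l: "avoiding_walk_count G b l z y > 0" by blast
    have "avoiding_walk_count G b l z y
        \<le> (\<Sum>z'\<in>verts G. if adj G u z' then avoiding_walk_count G b l z' y else 0)"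
      using member_le_sum[of z "verts G" "\<lambda>z'. if adj G u z' then avoiding_walk_count G b l z' y else 0"]
        step fin by auto
    then have "avoiding_walk_count G b (Suc l) u y > 0" using l step by simp
    then show ?case by blast
  qed (auto intro: exI[of _ 0])
next
  assume "\<exists>l. avoiding_walk_count G b l x y > 0"
  then obtain l where "avoiding_walk_count G b l x y > 0" by blast
  then show "reach_in G (verts G - {b}) x y" using x
  proof (induction l arbitrary: x)
    case 0
    then show ?case by (auto intro: reach_in_refl split: if_splits)
  next
    case (Suc l)
    then have xb: "x \<noteq> b" by (auto split: if_splits)
    then have "(\<Sum>z\<in>verts G. if adj G x z then avoiding_walk_count G b l z y else 0) \<noteq> 0"
      using Suc.prems(1) by simp
    then obtain z where z: "z \<in> verts G" "adj G x z" "avoiding_walk_count G b l z y > 0"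
      by (rule sum.not_neutral_contains_not_neutral) (auto split: if_splits)
    have rz: "reach_in G (verts G - {b}) z y" using Suc.IH z by blast
    then have "z \<noteq> b" unfolding reach_in_def by blast
    then have "reach_in G (verts G - {b}) x z"
      using reach_in_step[OF reach_in_refl, of x "verts G - {b}" G z] z xb Suc.prems(2) by auto
    then show ?case using reach_in_trans rz by metis
  qed
qed

definition tuple_in :: "('a, 'c) cgraph \<Rightarrow> nat \<Rightarrow> 'a list \<Rightarrow> bool" where
  "tuple_in G k s \<longleftrightarrow> length s = k \<and> set s \<subseteq> verts G"

lemma tuple_in_update: "tuple_in G k s \<Longrightarrow> z \<in> verts G \<Longrightarrow> tuple_in G k (s[i := z])"
  unfolding tuple_in_def using set_update_subset_insert by fastforce

lemma tuple_in_nth: "tuple_in G k s \<Longrightarrow> i < k \<Longrightarrow> s!i \<in> verts G"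
  unfolding tuple_in_def by (metis nth_mem subsetD)

lemma tuple_in_replicate: "v \<in> verts G \<Longrightarrow> tuple_in G k (replicate k v)"
  unfolding tuple_in_def by auto

text \<open>With b = s!1, the walk counts from s!0 to b, from b to b, from s!0 to y and from b to y are
  all read off 2-tuples whose colours agree, and together they determine the number of walks
  from s!0 to y avoiding b.\<close>
lemma wl_equiv_reach_in_delete:
  assumes wf: "wf_graph G" "wf_graph H" and k: "k \<ge> 2"
    and s: "tuple_in G k s" and t: "tuple_in H k t" and R: "wl_equiv G H k s t"
    and R1: "wl_equiv G H k (s[1 := y]) (t[1 := y'])"
    and R0: "wl_equiv G H k (s[0 := y]) (t[0 := y'])"
  shows "reach_in G (verts G - {s!1}) (s!0) y \<longleftrightarrow> reach_in H (verts H - {t!1}) (t!0) y'"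
proof -
  have fin: "finite (verts G)" "finite (verts H)" using wf unfolding wf_graph_def by blast+
  have len: "length s = k" "length t = k" using s t unfolding tuple_in_def by blast+
  have walks: "walk_count G m (s'!0) (s'!1) = walk_count H m (t'!0) (t'!1)"
    if "wl_equiv G H k s' t'" "length s' = k" "length t' = k" for s' t' m
    using wl_equiv_walk_count[OF that(1) fin k that(2,3)] .
  have "wl_equiv G H k (s[0 := s!1]) (t[0 := t!1])"
    using wl_equiv_update_nth[OF R fin, of 1 0] s len k unfolding tuple_in_def by auto
  then have bb: "\<forall>m. walk_count G m (s!1) (s!1) = walk_count H m (t!1) (t!1)"
    using walks[of "s[0 := s!1]" "t[0 := t!1]"] len k by simp
  have xb: "\<forall>m. walk_count G m (s!0) (s!1) = walk_count H m (t!0) (t!1)"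
    using walks[OF R len] by blast
  have xy: "\<forall>m. walk_count G m (s!0) y = walk_count H m (t!0) y'"
    using walks[OF R1] len k by simp
  have "\<forall>m. walk_count G m y (s!1) = walk_count H m y' (t!1)"
    using walks[OF R0] len k by simp
  then have by': "\<forall>m. walk_count G m (s!1) y = walk_count H m (t!1) y'"
    using walk_count_sym[OF wf(1)] walk_count_sym[OF wf(2)] by metis
  have "\<forall>l. avoiding_walk_count G (s!1) l (s!0) y = avoiding_walk_count H (t!1) l (t!0) y'"
    using avoiding_walk_count_determined[OF xb bb xy by'] by blast
  then show ?thesis
    using reach_in_delete_iff_avoiding_walk[OF wf(1) tuple_in_nth[OF s, of 0]]
      reach_in_delete_iff_avoiding_walk[OF wf(2) tuple_in_nth[OF t, of 0]] k by simp
qed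

lemma wl_equiv_separator:
  assumes wf: "wf_graph G" "wf_graph H" and k: "k \<ge> 2"
    and s: "tuple_in G k s" and t: "tuple_in H k t" and R: "wl_equiv G H k s t"
    and sep: "separator G {s!1}"
  shows "separator H {t!1}"
proof -
  have fin: "finite (verts G)" "finite (verts H)" using wf unfolding wf_graph_def by blast+
  have len: "length s = k" "length t = k" using s t unfolding tuple_in_def by blast+
  have idx: "0 < k" "1 < k" using k by simp_all
  obtain x y where x: "x \<in> verts G" "x \<noteq> s!1" and y: "y \<in> verts G" "y \<noteq> s!1"
    and xy: "\<not> reach_in G (verts G - {s!1}) x y"
    using sep unfolding separator_def by blast
  obtain g where g: "bij_betw g (verts G) (verts H)"
    "\<forall>z\<in>verts G. \<forall>i<k. wl_equiv G H k (s[i := z]) (t[i := g z])"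
    using wl_equiv_bij[OF R fin] by blast
  let ?s = "s[0 := x]" and ?t = "t[0 := g x]"
  have Rx: "wl_equiv G H k ?s ?t" using g(2) x k by auto
  have gx: "g x \<in> verts H" "g x \<noteq> t!1"
    using bij_betw_apply[OF g(1) x(1)] wl_equiv_upd_eq_iff[OF Rx, of 1] x len k by auto
  have sx: "tuple_in G k ?s" and tx: "tuple_in H k ?t"
    using tuple_in_update[OF s x(1)] tuple_in_update[OF t gx(1)] by blast+
  obtain f where f: "bij_betw f (verts G) (verts H)"
    "\<forall>z\<in>verts G. \<forall>i<k. wl_equiv G H k (?s[i := z]) (?t[i := f z])"
    using wl_equiv_bij[OF Rx fin] by blast
  have R1: "wl_equiv G H k (?s[1 := y]) (?t[1 := f y])"
    and R0: "wl_equiv G H k (?s[0 := y]) (?t[0 := f y])"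
    using f(2) y(1) idx by blast+
  have fy: "f y \<in> verts H" "f y \<noteq> t!1"
    using bij_betw_apply[OF f(1) y(1)] wl_equiv_upd_eq_iff[of G H k s 0 y t "f y" 1] R0 y len k
    by auto
  have "\<not> reach_in H (verts H - {t!1}) (g x) (f y)"
    using wl_equiv_reach_in_delete[OF wf k sx tx Rx R1 R0] xy len k by simp
  moreover have "t!1 \<in> verts H" using tuple_in_nth[OF t, of 1] k by simp
  ultimately show ?thesis unfolding separator_def using gx fy by blast
qed

lemma wl_equiv_reachable_cut_vertex:
  assumes wf: "wf_graph G" "wf_graph H" and k: "k \<ge> 2"
    and s: "tuple_in G k s" and t: "tuple_in H k t" and R: "wl_equiv G H k s t"
    and reach: "reach_in G (verts G - {s!1}) (s!0) d" and sep: "separator G {d}"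
  shows "\<exists>d'. reach_in H (verts H - {t!1}) (t!0) d' \<and> separator H {d'}"
proof -
  have fin: "finite (verts G)" "finite (verts H)" using wf unfolding wf_graph_def by blast+
  have dV: "d \<in> verts G" using reach_in_mem[OF reach] by blast
  obtain f where f: "bij_betw f (verts G) (verts H)"
    "\<forall>z\<in>verts G. \<forall>i<k. wl_equiv G H k (s[i := z]) (t[i := f z])"
    using wl_equiv_bij[OF R fin] by blast
  have "0 < k" "1 < k" using k by simp_all
  then have R1: "wl_equiv G H k (s[1 := d]) (t[1 := f d])"
    and R0: "wl_equiv G H k (s[0 := d]) (t[0 := f d])"
    using f(2) dV by blast+
  have "reach_in H (verts H - {t!1}) (t!0) (f d)"
    using wl_equiv_reach_in_delete[OF wf k s t R R1 R0] reach by blast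
  moreover have "separator H {t[1 := f d] ! 1}"
    using wl_equiv_separator[OF wf k tuple_in_update[OF s dV]
        tuple_in_update[OF t bij_betw_apply[OF f(1) dV]] R1] sep s k
    unfolding tuple_in_def by simp
  ultimately show ?thesis using t k unfolding tuple_in_def by auto
qed

lemma separator_nonempty: "connected G \<Longrightarrow> separator G S \<Longrightarrow> S \<noteq> {}"
  unfolding connected_def connected_set_def separator_def by auto

lemma min_separator_singleton:
  assumes wf: "wf_graph G" and con: "connected G" and sep: "separator G {d}"
  shows "min_separator G {d}"
proof -
  have "card {d} \<le> card S" if S: "separator G S" for S
  proof -
    have "finite S"
      using S wf unfolding separator_def wf_graph_def by (blast intro: finite_subset)
    then show ?thesis
      using separator_nonempty[OF con S] by (simp add: Suc_leI card_gt_0_iff)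
  qed
  then show ?thesis using sep unfolding min_separator_def by blast
qed

lemma min_separator_is_singleton:
  assumes wf: "wf_graph G" and con: "connected G" and ms: "min_separator G S"
    and sep: "separator G {d}"
  shows "\<exists>c. S = {c}"
proof -
  have "card S \<le> 1" using ms sep unfolding min_separator_def by force
  moreover have "S \<noteq> {}" using separator_nonempty[OF con] ms unfolding min_separator_def by blast
  moreover have "finite S"
    using ms wf unfolding min_separator_def separator_def wf_graph_def by (blast intro: finite_subset)
  ultimately show ?thesis by (metis card_0_eq card_1_singletonE le_antisym less_one not_le_imp_less)
qed

lemma not_two_connected_cut_vertex:
  assumes wf: "wf_graph G" and con: "connected G" and n2: "\<not> two_connected G"
    and sep: "separator G S"
  shows "\<exists>u. separator G {u}"
proof -
  obtain x y where xy: "x \<in> verts G - S" "y \<in> verts G - S" "\<not> reach_in G (verts G - S) x y"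
    using sep unfolding separator_def by blast
  then have "x \<noteq> y" using reach_in_refl by metis
  obtain z where "z \<in> S" using separator_nonempty[OF con sep] by blast
  then have "card {x, y, z} = 3" using xy \<open>x \<noteq> y\<close> by (auto simp: card_insert_if)
  moreover have "card {x, y, z} \<le> card (verts G)"
    using wf sep xy \<open>z \<in> S\<close> unfolding wf_graph_def separator_def by (intro card_mono) auto
  ultimately have "card (verts G) > 2" by linarith
  then obtain u where u: "u \<in> verts G" "\<not> connected_set G (verts G - {u})"
    using n2 unfolding two_connected_def by blast
  moreover have "verts G - {u} \<noteq> {}" using xy \<open>x \<noteq> y\<close> by blast
  ultimately obtain a b where "a \<in> verts G - {u}" "b \<in> verts G - {u}"
    "\<not> reach_in G (verts G - {u}) a b"
    unfolding connected_set_def by blast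
  then show ?thesis using u(1) unfolding separator_def by blast
qed

lemma component_of_eq_reach_in:
  assumes wf: "wf_graph G" and K: "component_of G S K" and w: "w \<in> K"
  shows "K = {y. reach_in G (verts G - S) w y}"
proof -
  obtain x where x: "K = {y. reach_in G (verts G - S) x y}"
    using K unfolding component_of_def by blast
  then have xw: "reach_in G (verts G - S) x w" using w by blast
  show ?thesis
  proof (intro set_eqI iffI; simp)
    fix y
    show "y \<in> K \<Longrightarrow> reach_in G (verts G - S) w y"
      using reach_in_trans[OF reach_in_sym[OF wf xw]] x by blast
    show "reach_in G (verts G - S) w y \<Longrightarrow> y \<in> K"
      using reach_in_trans[OF xw] x by blast
  qed
qed

lemma reach_in_delete_or_adj:
  assumes r: "reach_in G X x z" and x: "x \<in> X - {d}"
  shows "reach_in G (X - {d}) x z \<or> (\<exists>u. reach_in G (X - {d}) x u \<and> adj G u d)"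
proof -
  have "(\<lambda>a b. a \<in> X \<and> b \<in> X \<and> adj G a b)\<^sup>*\<^sup>* x z" using r unfolding reach_in_def by blast
  then show ?thesis
  proof (induction rule: rtranclp_induct)
    case base
    then show ?case using x reach_in_refl by metis
  next
    case (step y z)
    show ?case
    proof (cases "reach_in G (X - {d}) x y \<and> z \<noteq> d")
      case True
      then show ?thesis using reach_in_step[of G "X - {d}" x y z] step(2) by blast
    next
      case False
      then show ?thesis using step.IH step.hyps(2) by blast
    qed
  qed
qed

text \<open>If d \<in> K were a cut vertex, the component of G - d avoiding c would lie strictly
  inside K, contradicting minimality of ({c}, K).\<close>
lemma P0sep_component_no_cut_vertex:
  assumes wf: "wf_graph G" and con: "connected G"
    and P0: "({c}, K) \<in> P0sep G" and dK: "d \<in> K"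
  shows "\<not> separator G {d}"
proof
  assume sepd: "separator G {d}"
  let ?V = "verts G"
  have cmin: "min_separator G {c}" and "component_of G {c} K"
    using P0 unfolding P0sep_def Psep_def by blast+
  then obtain w where w: "w \<in> ?V - {c}" and Kw: "K = {y. reach_in G (?V - {c}) w y}"
    unfolding component_of_def by blast
  have wd: "reach_in G (?V - {c}) w d" using dK Kw by blast
  have cV: "c \<in> ?V" using cmin unfolding min_separator_def separator_def by blast
  have dV: "d \<in> ?V" and dc: "d \<noteq> c" using reach_in_mem[OF wd] by blast+
  obtain x y where xy: "x \<in> ?V - {d}" "y \<in> ?V - {d}" "\<not> reach_in G (?V - {d}) x y"
    using sepd unfolding separator_def by blast
  obtain x0 where x0: "x0 \<in> ?V - {d}" "\<not> reach_in G (?V - {d}) x0 c"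
  proof (cases "reach_in G (?V - {d}) x c")
    case True
    have "\<not> reach_in G (?V - {d}) y c"
    proof
      assume "reach_in G (?V - {d}) y c"
      then have "reach_in G (?V - {d}) x y" using reach_in_trans[OF True reach_in_sym[OF wf]] by blast
      then show False using xy(3) by blast
    qed
    then show ?thesis using that xy(2) by blast
  qed (use that xy(1) in blast)
  define L where "L = {z. reach_in G (?V - {d}) x0 z}"
  have "reach_in G ?V x0 d" using con x0(1) dV unfolding connected_def connected_set_def by blast
  moreover have "\<not> reach_in G (?V - {d}) x0 d" using reach_in_mem by fastforce
  ultimately obtain u where u: "reach_in G (?V - {d}) x0 u" "adj G u d"
    using reach_in_delete_or_adj[OF _ x0(1)] by blast
  have uc: "u \<noteq> c" using u(1) x0(2) by blast
  have "adj G d u" "u \<in> ?V" using u(2) wf unfolding wf_graph_def by blast+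
  then have wu: "reach_in G (?V - {c}) w u" using reach_in_step[OF wd] uc by blast
  have ux0: "reach_in G (?V - {d}) u x0" by (rule reach_in_sym[OF wf u(1)])
  have "L \<subseteq> K"
  proof
    fix z assume "z \<in> L"
    then have uz: "reach_in G (?V - {d}) u z" unfolding L_def using reach_in_trans[OF ux0] by blast
    have "reach_in G (?V - {c}) u z"
    proof (rule reach_in_mono_on_component[OF uz])
      fix z' assume z': "reach_in G (?V - {d}) u z'"
      then have "reach_in G (?V - {d}) x0 z'" by (rule reach_in_trans[OF u(1)])
      then show "z' \<in> ?V - {c}" using reach_in_mem[OF z'] x0(2) by blast
    qed
    then show "z \<in> K" using Kw reach_in_trans[OF wu] by blast
  qed
  moreover have "d \<notin> L" unfolding L_def using reach_in_mem[of G "?V - {d}" x0 d] by blast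
  ultimately have "L \<subset> K" using dK by blast
  moreover have "({d}, L) \<in> Psep G"
    unfolding Psep_def component_of_def L_def
    using min_separator_singleton[OF wf con sepd] x0(1) by blast
  ultimately show False using P0 unfolding P0sep_def by blast
qed

text \<open>If the component of v in G - c contained no cut vertex, it would be minimal in the
  order on P(G), contradicting v \<in> V(G_\<bottom>).\<close>
lemma verts_bot_reach_cut_vertex:
  assumes wf: "wf_graph G" and con: "connected G"
    and sepc: "separator G {c}" and v: "v \<in> verts G - {c}" and vb: "v \<in> verts_bot G"
  shows "\<exists>d. reach_in G (verts G - {c}) v d \<and> separator G {d}"
proof (rule ccontr)
  assume nd: "\<not> ?thesis"
  let ?V = "verts G"
  define K where "K = {y. reach_in G (?V - {c}) v y}"
  have "component_of G {c} K" unfolding component_of_def K_def using v by blast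
  then have inP: "({c}, K) \<in> Psep G"
    unfolding Psep_def using min_separator_singleton[OF wf con sepc] by blast
  have "v \<in> K" unfolding K_def using v by (simp add: reach_in_refl)
  then have "({c}, K) \<notin> P0sep G" using vb unfolding verts_bot_def by blast
  then obtain S' K' where SK': "(S', K') \<in> Psep G" "K' \<subset> K"
    using inP unfolding P0sep_def by blast
  then have ms': "min_separator G S'" and compK': "component_of G S' K'"
    unfolding Psep_def by blast+
  obtain d where d: "S' = {d}" using min_separator_is_singleton[OF wf con ms' sepc] by blast
  have "separator G {d}" using ms' d unfolding min_separator_def by blast
  then have nvd: "\<not> reach_in G (?V - {c}) v d" using nd by blast
  have restr: "reach_in G (?V - {d}) v y" if "reach_in G (?V - {c}) v y" for y
  proof (rule reach_in_mono_on_component[OF that])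
    fix z assume z: "reach_in G (?V - {c}) v z"
    then show "z \<in> ?V - {d}" using reach_in_mem[OF z] nvd by auto
  qed
  obtain x where x: "x \<in> ?V - {d}" and K': "K' = {y. reach_in G (?V - {d}) x y}"
    using compK' d unfolding component_of_def by blast
  then have "x \<in> K'" by (simp add: reach_in_refl)
  then have "reach_in G (?V - {c}) v x" using SK'(2) unfolding K_def by blast
  then have "reach_in G (?V - {d}) x v" using restr reach_in_sym[OF wf] by blast
  then have "K \<subseteq> K'"
    using K' restr reach_in_trans[of G "?V - {d}" x v] unfolding K_def by blast
  then show False using SK'(2) by blast
qed

lemma not_verts_bot_P0sep:
  assumes wf: "wf_graph G" and con: "connected G" and n2: "\<not> two_connected G"
    and w: "w \<in> verts G - verts_bot G"
  shows "\<exists>c. ({c}, {y. reach_in G (verts G - {c}) w y}) \<in> P0sep G \<and> w \<noteq> c"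
proof -
  obtain S K where SK: "(S, K) \<in> P0sep G" "w \<in> K"
    using w unfolding verts_bot_def by blast
  then have ms: "min_separator G S" and compK: "component_of G S K"
    unfolding P0sep_def Psep_def by blast+
  then obtain u where "separator G {u}"
    using not_two_connected_cut_vertex[OF wf con n2] unfolding min_separator_def by blast
  then obtain c where c: "S = {c}" using min_separator_is_singleton[OF wf con ms] by blast
  have "K = {y. reach_in G (verts G - {c}) w y}"
    using component_of_eq_reach_in[OF wf compK SK(2)] c by simp
  moreover have "w \<noteq> c"
    using compK SK(2) c reach_in_mem[of G "verts G - {c}"] unfolding component_of_def by blast
  ultimately show ?thesis using SK(1) c by blast
qed

theorem lemma8:
  fixes G :: "('a, 'c) cgraph" and H :: "('b, 'c) cgraph" and k :: nat
  assumes "k \<ge> 2"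
    and "wf_graph G" and "wf_graph H"
    and "connected G" and "connected H"
    and "\<not> two_connected G" and "\<not> two_connected H"
    and "v \<in> verts_bot G"
    and "w \<in> verts H - verts_bot H"
  shows "wl_vertex G k v \<noteq> wl_vertex H k w"
proof
  assume "wl_vertex G k v = wl_vertex H k w"
  then have R: "wl_equiv G H k (replicate k v) (replicate k w)"
    by (simp add: wl_equiv_def wl_vertex_def wl_stable_def fun_eq_iff)
  note k = assms(1) and wf = assms(2,3)
  have fin: "finite (verts G)" "finite (verts H)" using wf unfolding wf_graph_def by blast+
  have vV: "v \<in> verts G" using assms(8) unfolding verts_bot_def by (rule DiffD1)
  obtain c where P0: "({c}, {y. reach_in H (verts H - {c}) w y}) \<in> P0sep H" and "w \<noteq> c"
    using not_verts_bot_P0sep[OF wf(2) assms(5,7,9)] by blast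
  then have sepc: "separator H {c}" by (simp add: P0sep_def Psep_def min_separator_def)
  then obtain c' where c': "c' \<in> verts G"
    and R1: "wl_equiv G H k ((replicate k v)[1 := c']) ((replicate k w)[1 := c])"
    using wl_equiv_update_surj[OF R fin, of 1 c] k unfolding separator_def by auto
  have "v \<noteq> c'" using wl_equiv_upd_eq_iff[OF R1, of 0] \<open>w \<noteq> c\<close> k by auto
  have tv: "tuple_in G k ((replicate k v)[1 := c'])" and tw: "tuple_in H k ((replicate k w)[1 := c])"
    using vV assms(9) c' sepc by (auto intro!: tuple_in_update tuple_in_replicate simp: separator_def)
  have "separator G {c'}"
    using wl_equiv_separator[OF wf(2,1) k tw tv wl_equiv_sym[OF R1]] sepc k by simp
  then obtain d where "reach_in G (verts G - {c'}) v d" "separator G {d}"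
    using verts_bot_reach_cut_vertex[OF wf(1) assms(4) _ _ assms(8)] vV \<open>v \<noteq> c'\<close> by blast
  then obtain d' where "reach_in H (verts H - {c}) w d'" "separator H {d'}"
    using wl_equiv_reachable_cut_vertex[OF wf k tv tw R1] k by auto
  then show False using P0sep_component_no_cut_vertex[OF wf(2) assms(5) P0] by blast
qed

end
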